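(* For each $\otimes\in\{\mathrm{del},\mathrm{add},\mathrm{edit}\}$, $\textsc{RM}^{\otimes}_{\mathrm{basic}}(aa)\subseteq\mathrm{TC}^0$; i.e. for every sentence $\phi=\forall x\forall y\,\psi$ with $\psi$ quantifier-free over $\{E\}$, $\textsc{RM}^{\otimes}_{\mathrm{basic}}(\phi)\in\mathrm{TC}^0$.
   Context: A basic graph is $(V,E)$ with $E\subseteq V\times V$ symmetric and irreflexive. For $S\subseteq V\times V$, $\|S\|=|\{\{u,v\}:(u,v)\in S\}|$. For a first-order sentence $\phi$ over $\{E\}$, $\textsc{RM}^{\mathrm{edit}}_{\mathrm{basic}}(\phi)$: given a basic graph $(V,E)$ and $k\in\mathbb N$, is there $S$ with $\|S\|\le k$ such that $(V,E\triangle S)$ is a basic graph satisfying $\phi$; del (resp. add) versions require $S\subseteq E$ (resp. $S\cap E=\emptyset$). $\mathrm{TC}^0$: problems decided by constant-depth polynomial-size unbounded fan-in circuits with and/or/not and threshold gates. *)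

theory Defs
  imports Main
begin

datatype fo =
    FEq nat nat
  | FE nat nat
  | FNot fo
  | FAnd fo fo
  | FOr fo fo
  | FEx nat fo
  | FAll nat fo

fun free_vars :: "fo \<Rightarrow> nat set" where
  "free_vars (FEq i j) = {i, j}"
| "free_vars (FE i j) = {i, j}"
| "free_vars (FNot p) = free_vars p"
| "free_vars (FAnd p q) = free_vars p \<union> free_vars q"
| "free_vars (FOr p q) = free_vars p \<union> free_vars q"
| "free_vars (FEx x p) = free_vars p - {x}"
| "free_vars (FAll x p) = free_vars p - {x}"

fun qfree :: "fo \<Rightarrow> bool" where
  "qfree (FEq i j) = True"
| "qfree (FE i j) = True"
| "qfree (FNot p) = qfree p"
| "qfree (FAnd p q) = (qfree p \<and> qfree q)"
| "qfree (FOr p q) = (qfree p \<and> qfree q)"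
| "qfree (FEx x p) = False"
| "qfree (FAll x p) = False"

fun holds :: "nat \<Rightarrow> (nat \<times> nat) set \<Rightarrow> (nat \<Rightarrow> nat) \<Rightarrow> fo \<Rightarrow> bool" where
  "holds n E s (FEq i j) = (s i = s j)"
| "holds n E s (FE i j) = ((s i, s j) \<in> E)"
| "holds n E s (FNot p) = (\<not> holds n E s p)"
| "holds n E s (FAnd p q) = (holds n E s p \<and> holds n E s q)"
| "holds n E s (FOr p q) = (holds n E s p \<or> holds n E s q)"
| "holds n E s (FEx x p) = (\<exists>a<n. holds n E (s(x := a)) p)"
| "holds n E s (FAll x p) = (\<forall>a<n. holds n E (s(x := a)) p)"

definition sentence :: "fo \<Rightarrow> bool" where
  "sentence \<phi> \<longleftrightarrow> free_vars \<phi> = {}"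

text \<open>Satisfaction of a sentence (assignment irrelevant; we fix one).\<close>
definition models :: "nat \<Rightarrow> (nat \<times> nat) set \<Rightarrow> fo \<Rightarrow> bool" where
  "models n E \<phi> \<longleftrightarrow> holds n E (\<lambda>_. 0) \<phi>"

definition basic_graph :: "nat \<Rightarrow> (nat \<times> nat) set \<Rightarrow> bool" where
  "basic_graph n E \<longleftrightarrow> E \<subseteq> {0..<n} \<times> {0..<n} \<and> sym E \<and> irrefl E"

definition upair_count :: "(nat \<times> nat) set \<Rightarrow> nat" where
  "upair_count S = card ((\<lambda>(u, v). {u, v}) ` S)"

definition symdiff :: "'a set \<Rightarrow> 'a set \<Rightarrow> 'a set" where
  "symdiff A B = (A - B) \<union> (B - A)"

datatype mode = Del | Add | Edit

definition RM_yes :: "mode \<Rightarrow> fo \<Rightarrow> nat \<Rightarrow> (nat \<times> nat) set \<Rightarrow> nat \<Rightarrow> bool" where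
  "RM_yes md \<phi> n E k \<longleftrightarrow>
     (\<exists>S. S \<subseteq> {0..<n} \<times> {0..<n} \<and> upair_count S \<le> k
        \<and> (md = Del \<longrightarrow> S \<subseteq> E) \<and> (md = Add \<longrightarrow> S \<inter> E = {})
        \<and> basic_graph n (symdiff E S) \<and> models n (symdiff E S) \<phi>)"

text \<open>Circuits are represented as trees (formulas); for constant depth this
  changes the size only polynomially. \<open>CThr t cs\<close> outputs 1 iff at least t of
  its inputs are 1.\<close>

datatype circuit =
    CIn nat
  | CConst bool
  | CNot circuit
  | CAnd "circuit list"
  | COr "circuit list"
  | CThr nat "circuit list"

fun ceval :: "(nat \<Rightarrow> bool) \<Rightarrow> circuit \<Rightarrow> bool" where
  "ceval x (CIn i) = x i"
| "ceval x (CConst b) = b"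
| "ceval x (CNot c) = (\<not> ceval x c)"
| "ceval x (CAnd cs) = (\<forall>c\<in>set cs. ceval x c)"
| "ceval x (COr cs) = (\<exists>c\<in>set cs. ceval x c)"
| "ceval x (CThr t cs) = (t \<le> length (filter (ceval x) cs))"

fun csize :: "circuit \<Rightarrow> nat" where
  "csize (CIn i) = 1"
| "csize (CConst b) = 1"
| "csize (CNot c) = Suc (csize c)"
| "csize (CAnd cs) = Suc (sum_list (map csize cs))"
| "csize (COr cs) = Suc (sum_list (map csize cs))"
| "csize (CThr t cs) = Suc (sum_list (map csize cs))"

fun cdepth :: "circuit \<Rightarrow> nat" where
  "cdepth (CIn i) = 0"
| "cdepth (CConst b) = 0"
| "cdepth (CNot c) = Suc (cdepth c)"
| "cdepth (CAnd cs) = Suc (fold max (map cdepth cs) 0)"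
| "cdepth (COr cs) = Suc (fold max (map cdepth cs) 0)"
| "cdepth (CThr t cs) = Suc (fold max (map cdepth cs) 0)"

fun cinputs :: "circuit \<Rightarrow> nat set" where
  "cinputs (CIn i) = {i}"
| "cinputs (CConst b) = {}"
| "cinputs (CNot c) = cinputs c"
| "cinputs (CAnd cs) = (\<Union>c\<in>set cs. cinputs c)"
| "cinputs (COr cs) = (\<Union>c\<in>set cs. cinputs c)"
| "cinputs (CThr t cs) = (\<Union>c\<in>set cs. cinputs c)"

text \<open>An instance (G, k) with G on {0..<n} and k < 2^m is encoded by n*n + m bits:
  the adjacency matrix in row-major order (bit i*n+j is (i,j) \<in> E), followed by the
  m-bit binary representation of k (least significant bit first).\<close>

definition enc :: "nat \<Rightarrow> (nat \<times> nat) set \<Rightarrow> nat \<Rightarrow> nat \<Rightarrow> bool" where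
  "enc n E k i = (if i < n * n then (i div n, i mod n) \<in> E else odd (k div 2 ^ (i - n * n)))"

definition in_TC0 :: "(nat \<Rightarrow> (nat \<times> nat) set \<Rightarrow> nat \<Rightarrow> bool) \<Rightarrow> bool" where
  "in_TC0 P \<longleftrightarrow>
     (\<exists>(C :: nat \<Rightarrow> nat \<Rightarrow> circuit) (d :: nat) (c :: nat) (e :: nat).
        \<forall>n m. cdepth (C n m) \<le> d
            \<and> csize (C n m) \<le> c * (n * n + m + 1) ^ e
            \<and> cinputs (C n m) \<subseteq> {..< n * n + m}
            \<and> (\<forall>E k. basic_graph n E \<and> k < 2 ^ m \<longrightarrow>
                   (ceval (enc n E k) (C n m) \<longleftrightarrow> P n E k)))"

end

theory Submission
  imports Defs
begin

(* Since \<psi> is quantifier-free in x and y, its truth at a pair (a, b) of a basic graph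
   depends only on whether a = b, whether (a, b) is an edge, or neither.  Hence
   \<forall>x \<forall>y \<psi> holds in G iff \<psi> holds on loops (when G has a vertex), on edges (when G has
   one) and on non-edges (when G is not complete).  So if some edit S of E satisfies the
   sentence, either E itself does, or E \<triangle> S contains an edge and a non-edge (and then E
   satisfies it too), or E \<triangle> S is the complete or the empty graph, reached at cost the
   number of non-edges resp. edges of E.  The problem therefore reduces to comparing the
   number of ones among at most n^2 input bits with the binary number k, which a single
   threshold gate does when bit j of k is fed in 2^j times. *)

lemma holds_qfree_cong:
  assumes "qfree \<psi>" "free_vars \<psi> \<subseteq> V"
    and "\<forall>i\<in>V. \<forall>j\<in>V. (s i = s j \<longleftrightarrow> s' i = s' j)
                      \<and> ((s i, s j) \<in> E \<longleftrightarrow> (s' i, s' j) \<in> E')"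
  shows "holds n E s \<psi> \<longleftrightarrow> holds n' E' s' \<psi>"
  using assms by (induction \<psi>) auto

definition holds_on_loop :: "fo \<Rightarrow> bool" where
  "holds_on_loop \<psi> \<longleftrightarrow> holds 1 {} (\<lambda>_. 0) \<psi>"

definition holds_on_edge :: "fo \<Rightarrow> nat \<Rightarrow> nat \<Rightarrow> bool" where
  "holds_on_edge \<psi> x y \<longleftrightarrow> holds 2 {(0, 1), (1, 0)} ((\<lambda>_. 0)(x := 0, y := 1)) \<psi>"

definition holds_on_nonedge :: "fo \<Rightarrow> nat \<Rightarrow> nat \<Rightarrow> bool" where
  "holds_on_nonedge \<psi> x y \<longleftrightarrow> holds 2 {} ((\<lambda>_. 0)(x := 0, y := 1)) \<psi>"

lemma holds_pair_basic_graph: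
  assumes "qfree \<psi>" "free_vars \<psi> \<subseteq> {x, y}" "basic_graph n G"
  shows "holds n G ((\<lambda>_. 0)(x := a, y := b)) \<psi> \<longleftrightarrow>
    (if a = b then holds_on_loop \<psi>
     else if (a, b) \<in> G then holds_on_edge \<psi> x y else holds_on_nonedge \<psi> x y)"
proof -
  have "(a, a) \<notin> G" "(b, b) \<notin> G" "(a, b) \<in> G \<longleftrightarrow> (b, a) \<in> G"
    using assms(3) by (auto simp: basic_graph_def sym_def irrefl_def)
  then show ?thesis
    unfolding holds_on_loop_def holds_on_edge_def holds_on_nonedge_def
    by (cases "x = y") (auto intro!: holds_qfree_cong[OF assms(1,2)])
qed

definition complete_graph :: "nat \<Rightarrow> (nat \<times> nat) set" where
  "complete_graph n = {(a, b). a < n \<and> b < n \<and> a \<noteq> b}"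

lemma basic_graph_subset_complete_graph: "basic_graph n G \<Longrightarrow> G \<subseteq> complete_graph n"
  by (auto simp: basic_graph_def complete_graph_def irrefl_def)

lemma basic_graph_empty: "basic_graph n {}"
  by (simp add: basic_graph_def sym_def irrefl_def)

lemma basic_graph_complete_graph_diff:
  "basic_graph n G \<Longrightarrow> basic_graph n (complete_graph n - G)"
  by (auto simp: basic_graph_def complete_graph_def sym_def irrefl_def)

lemma models_FAll_FAll_iff:
  assumes "qfree \<psi>" "free_vars \<psi> \<subseteq> {x, y}" "basic_graph n G"
  shows "models n G (FAll x (FAll y \<psi>)) \<longleftrightarrow>
    (0 < n \<longrightarrow> holds_on_loop \<psi>) \<and> (G \<noteq> {} \<longrightarrow> holds_on_edge \<psi> x y)
    \<and> (G \<noteq> complete_graph n \<longrightarrow> holds_on_nonedge \<psi> x y)"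
proof -
  have G: "G \<subseteq> complete_graph n"
    using assms(3) by (rule basic_graph_subset_complete_graph)
  have "models n G (FAll x (FAll y \<psi>)) \<longleftrightarrow> (\<forall>a<n. \<forall>b<n.
      if a = b then holds_on_loop \<psi>
      else if (a, b) \<in> G then holds_on_edge \<psi> x y else holds_on_nonedge \<psi> x y)"
    by (simp add: models_def holds_pair_basic_graph[OF assms])
  also have "\<dots> \<longleftrightarrow> (0 < n \<longrightarrow> holds_on_loop \<psi>) \<and> (G \<noteq> {} \<longrightarrow> holds_on_edge \<psi> x y)
      \<and> (G \<noteq> complete_graph n \<longrightarrow> holds_on_nonedge \<psi> x y)"
    using G unfolding complete_graph_def by auto
  finally show ?thesis .
qed

lemma symdiff_eq_empty_iff: "symdiff E S = {} \<longleftrightarrow> S = E"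
  by (auto simp: symdiff_def)

lemma RM_yes_FAll_FAll_iff:
  assumes "qfree \<psi>" "free_vars \<psi> \<subseteq> {x, y}" "basic_graph n E"
  defines "\<phi> \<equiv> FAll x (FAll y \<psi>)"
  shows "RM_yes md \<phi> n E k \<longleftrightarrow>
    models n E \<phi>
    \<or> md \<noteq> Del \<and> models n (complete_graph n) \<phi> \<and> upair_count (complete_graph n - E) \<le> k
    \<or> md \<noteq> Add \<and> models n {} \<phi> \<and> upair_count E \<le> k"
  (is "_ \<longleftrightarrow> ?keep \<or> ?complete \<or> ?empty")
proof
  assume "?keep \<or> ?complete \<or> ?empty"
  moreover have "RM_yes md \<phi> n E k" if ?keep
    using that assms(3) unfolding RM_yes_def
    by (intro exI[of _ "{}"]) (simp add: symdiff_def upair_count_def)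
  moreover have "RM_yes md \<phi> n E k" if ?complete
  proof -
    have "symdiff E (complete_graph n - E) = complete_graph n"
      using basic_graph_subset_complete_graph[OF assms(3)] by (auto simp: symdiff_def)
    then show ?thesis
      using that basic_graph_complete_graph_diff[OF basic_graph_empty] unfolding RM_yes_def
      by (intro exI[of _ "complete_graph n - E"]) (auto simp: complete_graph_def)
  qed
  moreover have "RM_yes md \<phi> n E k" if ?empty
    using that assms(3) unfolding RM_yes_def
    by (intro exI[of _ E]) (auto simp: symdiff_def basic_graph_empty basic_graph_def)
  ultimately show "RM_yes md \<phi> n E k" by blast
next
  assume "RM_yes md \<phi> n E k"
  then obtain S
    where S: "upair_count S \<le> k" "md = Del \<longrightarrow> S \<subseteq> E" "md = Add \<longrightarrow> S \<inter> E = {}"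
    and G: "basic_graph n (symdiff E S)" "models n (symdiff E S) \<phi>"
    unfolding RM_yes_def by blast
  consider "symdiff E S = {}" | "symdiff E S = complete_graph n"
    | "symdiff E S \<noteq> {}" "symdiff E S \<noteq> complete_graph n"
    by blast
  then show "?keep \<or> ?complete \<or> ?empty"
  proof cases
    case 1
    then have "S = E" by (simp add: symdiff_eq_empty_iff)
    then show ?thesis using 1 S G by auto
  next
    case 2
    have E: "E \<subseteq> complete_graph n"
      using assms(3) by (rule basic_graph_subset_complete_graph)
    with 2 have S_eq: "S = complete_graph n - E"
      by (auto simp: symdiff_def)
    moreover have "md = Del \<Longrightarrow> E = complete_graph n"
      using S(2) S_eq E by blast
    ultimately show ?thesis using 2 S G by auto
  next
    case 3
    then show ?thesis
      using G models_FAll_FAll_iff[OF assms(1,2)] assms(3) unfolding \<phi>_def by auto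
  qed
qed

lemma upair_count_eq_card_ordered:
  assumes "sym A" "irrefl A" "finite A"
  shows "upair_count A = card {(u, v) \<in> A. u < v}"
proof -
  let ?f = "\<lambda>(u :: nat, v). {u, v}"
  have "?f ` A = ?f ` {(u, v) \<in> A. u < v}"
  proof
    show "?f ` A \<subseteq> ?f ` {(u, v) \<in> A. u < v}"
    proof clarify
      fix u v assume uv: "(u, v) \<in> A"
      then have "(v, u) \<in> A" "u \<noteq> v"
        using assms(1,2) by (auto simp: sym_def irrefl_def)
      then show "{u, v} \<in> ?f ` {(u, v) \<in> A. u < v}"
        using uv by (cases "u < v") (auto simp: image_iff, metis insert_commute linorder_neqE_nat)
    qed
  qed auto
  moreover have "inj_on ?f {(u, v) \<in> A. u < v}"
    by (auto simp: inj_on_def doubleton_eq_iff)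
  ultimately show ?thesis
    by (simp add: upair_count_def card_image)
qed

lemma upair_count_eq_0_iff: "finite S \<Longrightarrow> upair_count S = 0 \<longleftrightarrow> S = {}"
  by (simp add: upair_count_def)

definition upper_pairs :: "nat \<Rightarrow> (nat \<times> nat) list" where
  "upper_pairs n = filter (\<lambda>(i, j). i < j) (List.product [0..<n] [0..<n])"

lemma distinct_upper_pairs: "distinct (upper_pairs n)"
  by (simp add: upper_pairs_def distinct_product)

lemma set_upper_pairs: "set (upper_pairs n) = {(i, j). i < j \<and> j < n}"
  by (auto simp: upper_pairs_def)

lemma length_upper_pairs_le: "length (upper_pairs n) \<le> n * n"
  unfolding upper_pairs_def using length_filter_le[of _ "List.product [0..<n] [0..<n]"] by simp

lemma upair_count_eq_length_filter_upper_pairs: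
  assumes "basic_graph n G"
  shows "upair_count G = length (filter (\<lambda>p. p \<in> G) (upper_pairs n))"
proof -
  have "finite G"
    using assms unfolding basic_graph_def by (auto intro: finite_subset)
  then have "upair_count G = card {(u, v) \<in> G. u < v}"
    using assms by (intro upair_count_eq_card_ordered) (auto simp: basic_graph_def)
  also have "{(u, v) \<in> G. u < v} = {p. p \<in> G} \<inter> set (upper_pairs n)"
    using assms by (auto simp: basic_graph_def set_upper_pairs)
  finally show ?thesis
    by (simp add: distinct_length_filter[OF distinct_upper_pairs])
qed

lemma edge_index_less: "i < n \<Longrightarrow> j < (n :: nat) \<Longrightarrow> i * n + j < n * n"
proof -
  assume "i < n" "j < n"
  then have "i * n + j < Suc i * n" by simp
  also have "\<dots> \<le> n * n" using \<open>i < n\<close> by (intro mult_le_mono1) simp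
  finally show ?thesis .
qed

lemma enc_edge: "i < n \<Longrightarrow> j < n \<Longrightarrow> enc n E k (i * n + j) \<longleftrightarrow> (i, j) \<in> E"
  by (simp add: enc_def edge_index_less)

definition bits_value :: "(nat \<Rightarrow> bool) \<Rightarrow> nat \<Rightarrow> nat \<Rightarrow> nat" where
  "bits_value x off m = (\<Sum>j<m. of_bool (x (off + j)) * 2 ^ j)"

lemma bits_value_enc:
  assumes "k < 2 ^ m"
  shows "bits_value (enc n E k) (n * n) m = k"
proof -
  have "bits_value (enc n E k) (n * n) m = take_bit m k"
    by (simp add: bits_value_def enc_def take_bit_sum push_bit_eq_mult bit_iff_odd atLeast0LessThan)
  also have "\<dots> = k"
    using assms by (simp add: take_bit_nat_eq_self)
  finally show ?thesis .
qed

lemma fold_max_le_iff: "fold max xs a \<le> (d :: nat) \<longleftrightarrow> a \<le> d \<and> (\<forall>x\<in>set xs. x \<le> d)"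
  by (induction xs arbitrary: a) auto

lemma sum_list_le_length_mult:
  "(\<And>x. x \<in> set xs \<Longrightarrow> f x \<le> (b :: nat)) \<Longrightarrow> sum_list (map f xs) \<le> b * length xs"
  by (induction xs) (auto simp: add_mono)

definition weighted_bits :: "nat \<Rightarrow> nat list \<Rightarrow> circuit list" where
  "weighted_bits off js = concat (map (\<lambda>j. replicate (2 ^ j) (CIn (off + j))) js)"

lemma count_weighted_bits:
  "length (filter (ceval x) (weighted_bits off js)) = (\<Sum>j\<leftarrow>js. of_bool (x (off + j)) * 2 ^ j)"
  by (induction js) (auto simp: weighted_bits_def)

lemma csize_weighted_bits: "sum_list (map csize (weighted_bits off js)) = (\<Sum>j\<leftarrow>js. 2 ^ j)"
  by (induction js) (auto simp: weighted_bits_def sum_list_replicate)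

(* The threshold gate adds the false members of cs to the bits j of k with 2 ^ j \<le> |cs|,
   each counted 2 ^ j times; a set bit with 2 ^ j > |cs| alone makes k exceed |cs|. *)
definition count_le :: "circuit list \<Rightarrow> nat \<Rightarrow> nat \<Rightarrow> circuit" where
  "count_le cs off m =
     COr [COr (map (\<lambda>j. CIn (off + j)) (filter (\<lambda>j. length cs < 2 ^ j) [0..<m])),
          CThr (length cs)
            (map CNot cs @ weighted_bits off (filter (\<lambda>j. 2 ^ j \<le> length cs) [0..<m]))]"

lemma ceval_count_le:
  "ceval x (count_le cs off m) \<longleftrightarrow> length (filter (ceval x) cs) \<le> bits_value x off m"
proof -
  let ?t = "length (filter (ceval x) cs)"
  let ?bit = "\<lambda>j. of_bool (x (off + j)) * 2 ^ j :: nat"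
  define low where "low = (\<Sum>j \<in> {j. j < m \<and> 2 ^ j \<le> length cs}. ?bit j)"
  have false_count: "length (filter (\<lambda>c. \<not> ceval x c) cs) = length cs - ?t"
    using sum_length_filter_compl[of "ceval x" cs] by simp
  have low_eq: "(\<Sum>j\<leftarrow>filter (\<lambda>j. 2 ^ j \<le> length cs) [0..<m]. ?bit j) = low"
    unfolding low_def by (subst sum_list_distinct_conv_sum_set) (auto intro: sum.cong)
  have threshold: "length cs \<le> (length cs - ?t) + low \<longleftrightarrow> ?t \<le> low"
    using length_filter_le[of "ceval x" cs] by arith
  have ceval_eq: "ceval x (count_le cs off m) \<longleftrightarrow>
      (\<exists>j<m. length cs < 2 ^ j \<and> x (off + j)) \<or> ?t \<le> low"
    by (simp add: count_le_def count_weighted_bits filter_map comp_def false_count low_eq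
        flip: threshold)
  show ?thesis
  proof (cases "\<exists>j<m. length cs < 2 ^ j \<and> x (off + j)")
    case True
    then obtain j where j: "j < m" "length cs < 2 ^ j" "x (off + j)" by blast
    have "?t \<le> length cs" by (rule length_filter_le)
    also have "\<dots> < ?bit j" using j by simp
    also have "\<dots> \<le> bits_value x off m"
      unfolding bits_value_def using j(1) by (intro member_le_sum) auto
    finally show ?thesis using ceval_eq True by simp
  next
    case False
    then have "2 ^ j \<le> length cs" if "j < m" "x (off + j)" for j
      using that not_le by blast
    then have "bits_value x off m = low"
      unfolding bits_value_def low_def by (intro sum.mono_neutral_right) auto
    then show ?thesis using ceval_eq False by simp
  qed
qed

lemma cdepth_count_le:
  "(\<And>c. c \<in> set cs \<Longrightarrow> cdepth c \<le> d) \<Longrightarrow> cdepth (count_le cs off m) \<le> d + 3"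
  by (auto simp: count_le_def weighted_bits_def fold_max_le_iff)

lemma csize_count_le:
  assumes "\<And>c. c \<in> set cs \<Longrightarrow> csize c \<le> s"
  shows "csize (count_le cs off m) \<le> 3 + m + (s + 1 + m) * length cs"
proof -
  let ?low = "filter (\<lambda>j. 2 ^ j \<le> length cs) [0..<m]"
  let ?high = "filter (\<lambda>j. length cs < 2 ^ j) [0..<m]"
  have size_eq: "csize (count_le cs off m)
      = 3 + length ?high + (\<Sum>c\<leftarrow>cs. Suc (csize c)) + (\<Sum>j\<leftarrow>?low. 2 ^ j)"
    by (simp add: count_le_def comp_def sum_list_triv csize_weighted_bits)
  have "(\<Sum>c\<leftarrow>cs. Suc (csize c)) \<le> (s + 1) * length cs"
    using assms by (intro sum_list_le_length_mult) (simp add: Suc_le_mono)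
  moreover have "(\<Sum>j\<leftarrow>?low. 2 ^ j) \<le> length cs * length ?low"
    by (intro sum_list_le_length_mult) simp
  moreover have "length cs * length ?low \<le> length cs * m"
    using length_filter_le[of _ "[0..<m]"] by (intro mult_le_mono2) simp
  moreover have "length ?high \<le> m"
    using length_filter_le[of _ "[0..<m]"] by simp
  moreover have "(s + 1 + m) * length cs = (s + 1) * length cs + length cs * m"
    by (simp add: algebra_simps)
  ultimately show ?thesis
    unfolding size_eq by linarith
qed

lemma cinputs_count_le:
  "cinputs (count_le cs off m) \<subseteq> (\<Union>c\<in>set cs. cinputs c) \<union> {off..<off + m}"
  by (auto simp: count_le_def weighted_bits_def)

definition edge_literals :: "nat \<Rightarrow> circuit list" where
  "edge_literals n = map (\<lambda>(i, j). CIn (i * n + j)) (upper_pairs n)"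

definition nonedge_literals :: "nat \<Rightarrow> circuit list" where
  "nonedge_literals n = map CNot (edge_literals n)"

lemma count_edge_literals:
  assumes "basic_graph n E"
  shows "length (filter (ceval (enc n E k)) (edge_literals n)) = upair_count E"
proof -
  have "length (filter (ceval (enc n E k)) (edge_literals n))
      = length (filter (\<lambda>p. p \<in> E) (upper_pairs n))"
    unfolding edge_literals_def filter_map
    by (simp add: comp_def case_prod_beta, intro arg_cong[where f = length] filter_cong)
       (auto simp: set_upper_pairs enc_edge)
  then show ?thesis
    using upair_count_eq_length_filter_upper_pairs[OF assms] by simp
qed

lemma count_nonedge_literals:
  assumes "basic_graph n E"
  shows "length (filter (ceval (enc n E k)) (nonedge_literals n))
    = upair_count (complete_graph n - E)"
proof -
  have "length (filter (ceval (enc n E k)) (nonedge_literals n))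
      = length (filter (\<lambda>p. p \<in> complete_graph n - E) (upper_pairs n))"
    unfolding nonedge_literals_def edge_literals_def filter_map
    by (simp add: comp_def case_prod_beta, intro arg_cong[where f = length] filter_cong)
       (auto simp: set_upper_pairs enc_edge complete_graph_def)
  then show ?thesis
    using upair_count_eq_length_filter_upper_pairs[OF basic_graph_complete_graph_diff[OF assms]]
    by simp
qed

lemma edge_literal_CIn: "c \<in> set (edge_literals n) \<Longrightarrow> \<exists>i < n * n. c = CIn i"
  by (auto simp: edge_literals_def set_upper_pairs edge_index_less)

lemma nonedge_literal_CNot: "c \<in> set (nonedge_literals n) \<Longrightarrow> \<exists>i < n * n. c = CNot (CIn i)"
  using edge_literal_CIn by (fastforce simp: nonedge_literals_def)

lemma length_edge_literals_le: "length (edge_literals n) \<le> n * n"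
  using length_upper_pairs_le by (simp add: edge_literals_def)

lemma length_nonedge_literals: "length (nonedge_literals n) = length (edge_literals n)"
  by (simp add: nonedge_literals_def)

definition models_circuit :: "fo \<Rightarrow> nat \<Rightarrow> nat \<Rightarrow> nat \<Rightarrow> circuit" where
  "models_circuit \<psi> x y n =
     CAnd [CConst (0 < n \<longrightarrow> holds_on_loop \<psi>),
           COr [CNot (CThr 1 (edge_literals n)), CConst (holds_on_edge \<psi> x y)],
           COr [CNot (CThr 1 (nonedge_literals n)), CConst (holds_on_nonedge \<psi> x y)]]"

definition repair_circuit :: "mode \<Rightarrow> fo \<Rightarrow> nat \<Rightarrow> nat \<Rightarrow> nat \<Rightarrow> nat \<Rightarrow> circuit" where
  "repair_circuit md \<psi> x y n m =
     COr [models_circuit \<psi> x y n,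
          CAnd [CConst (md \<noteq> Del \<and> models n (complete_graph n) (FAll x (FAll y \<psi>))),
                count_le (nonedge_literals n) (n * n) m],
          CAnd [CConst (md \<noteq> Add \<and> models n {} (FAll x (FAll y \<psi>))),
                count_le (edge_literals n) (n * n) m]]"

lemma ceval_models_circuit:
  assumes "qfree \<psi>" "free_vars \<psi> \<subseteq> {x, y}" "basic_graph n E"
  shows "ceval (enc n E k) (models_circuit \<psi> x y n) \<longleftrightarrow> models n E (FAll x (FAll y \<psi>))"
proof -
  have K: "finite (complete_graph n)"
    by (rule finite_subset[of _ "{..<n} \<times> {..<n}"]) (auto simp: complete_graph_def)
  have E: "E \<subseteq> complete_graph n"
    using assms(3) by (rule basic_graph_subset_complete_graph)
  have "E \<noteq> {} \<longleftrightarrow> upair_count E \<noteq> 0"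
    using finite_subset[OF E K] by (simp add: upair_count_eq_0_iff)
  moreover have "E \<noteq> complete_graph n \<longleftrightarrow> upair_count (complete_graph n - E) \<noteq> 0"
    using K E by (auto simp: upair_count_eq_0_iff)
  ultimately show ?thesis
    using count_edge_literals[OF assms(3)] count_nonedge_literals[OF assms(3)]
    by (auto simp: models_circuit_def models_FAll_FAll_iff[OF assms] Suc_le_eq)
qed

lemma ceval_repair_circuit:
  assumes "qfree \<psi>" "free_vars \<psi> \<subseteq> {x, y}" "basic_graph n E" "k < 2 ^ m"
  shows "ceval (enc n E k) (repair_circuit md \<psi> x y n m)
    \<longleftrightarrow> RM_yes md (FAll x (FAll y \<psi>)) n E k"
  using count_edge_literals[OF assms(3)] count_nonedge_literals[OF assms(3)]
  by (simp add: repair_circuit_def ceval_models_circuit[OF assms(1-3)] ceval_count_le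
      bits_value_enc[OF assms(4)] RM_yes_FAll_FAll_iff[OF assms(1-3)])

lemma cdepth_repair_circuit: "cdepth (repair_circuit md \<psi> x y n m) \<le> 6"
  using cdepth_count_le[of "edge_literals n" 1] cdepth_count_le[of "nonedge_literals n" 1]
    edge_literal_CIn nonedge_literal_CNot
  by (fastforce simp: repair_circuit_def models_circuit_def fold_max_le_iff)

lemma cinputs_repair_circuit: "cinputs (repair_circuit md \<psi> x y n m) \<subseteq> {..<n * n + m}"
  using cinputs_count_le[of "edge_literals n" "n * n" m] cinputs_count_le[of "nonedge_literals n" "n * n" m]
    edge_literal_CIn nonedge_literal_CNot
  by (fastforce simp: repair_circuit_def models_circuit_def)

lemma csize_repair_circuit: "csize (repair_circuit md \<psi> x y n m) \<le> 40 * (n * n + m + 1) ^ 2"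
proof -
  let ?P = "length (edge_literals n)"
  let ?T = "n * n + m + 1"
  have pos: "csize c = 1" if "c \<in> set (edge_literals n)" for c
    using edge_literal_CIn[OF that] by auto
  have neg: "csize c = 2" if "c \<in> set (nonedge_literals n)" for c
    using nonedge_literal_CNot[OF that] by auto
  have "csize (repair_circuit md \<psi> x y n m) = 15
      + sum_list (map csize (edge_literals n)) + sum_list (map csize (nonedge_literals n))
      + csize (count_le (nonedge_literals n) (n * n) m) + csize (count_le (edge_literals n) (n * n) m)"
    by (simp add: repair_circuit_def models_circuit_def)
  moreover have "sum_list (map csize (edge_literals n)) \<le> 1 * ?P"
    "sum_list (map csize (nonedge_literals n)) \<le> 2 * ?P"
    using sum_list_le_length_mult[of "edge_literals n" csize 1]
      sum_list_le_length_mult[of "nonedge_literals n" csize 2] pos neg length_nonedge_literals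
    by fastforce+
  moreover have "csize (count_le (nonedge_literals n) (n * n) m) \<le> 3 + m + 3 * ?P + m * ?P"
    "csize (count_le (edge_literals n) (n * n) m) \<le> 3 + m + 2 * ?P + m * ?P"
    using csize_count_le[of "nonedge_literals n" 2] csize_count_le[of "edge_literals n" 1]
      pos neg length_nonedge_literals
    by (fastforce simp: algebra_simps)+
  moreover have T: "?P \<le> ?T" "m \<le> ?T" "1 \<le> ?T" "?T \<le> ?T ^ 2"
    using length_edge_literals_le[of n] by (simp_all add: power2_eq_square)
  then have "?P \<le> ?T ^ 2" "m \<le> ?T ^ 2" "1 \<le> ?T ^ 2" "m * ?P \<le> ?T ^ 2"
    using mult_le_mono[OF T(2,1)] by (simp_all add: power2_eq_square)
  ultimately show ?thesis
    by linarith
qed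

theorem lemma4p10:
  fixes md :: mode and x y :: nat and \<psi> :: fo
  assumes "qfree \<psi>" and "free_vars \<psi> \<subseteq> {x, y}"
  shows "in_TC0 (RM_yes md (FAll x (FAll y \<psi>)))"
proof -
  let ?C = "repair_circuit md \<psi> x y"
  have "\<forall>n m. cdepth (?C n m) \<le> 6 \<and> csize (?C n m) \<le> 40 * (n * n + m + 1) ^ 2
      \<and> cinputs (?C n m) \<subseteq> {..< n * n + m}
      \<and> (\<forall>E k. basic_graph n E \<and> k < 2 ^ m \<longrightarrow>
             (ceval (enc n E k) (?C n m) \<longleftrightarrow> RM_yes md (FAll x (FAll y \<psi>)) n E k))"
    using cdepth_repair_circuit csize_repair_circuit cinputs_repair_circuit
      ceval_repair_circuit[OF assms] by auto
  then show ?thesis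
    unfolding in_TC0_def by blast
qed

end
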